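(* There is no $x\in\mathbb{R}\setminus\mathbb{Q}$ whose Jacobi sequence contains four consecutive terms $-1,1,1,-1$; that is, there is no $k\ge0$ with $\left(\frac{s_k}{t_k}\right)=-1$, $\left(\frac{s_{k+1}}{t_{k+1}}\right)=\left(\frac{s_{k+2}}{t_{k+2}}\right)=1$, $\left(\frac{s_{k+3}}{t_{k+3}}\right)=-1$. In particular, there is no $x\in\mathbb{R}\setminus\mathbb{Q}$ whose Jacobi sequence is eventually periodic with repeating block $1,1,-1$.
   Context: For $x\in\mathbb{R}\setminus\mathbb{Q}$ with regular continued fraction expansion $x=[a_0,a_1,a_2,\ldots]$, the convergents $s_k/t_k$ are defined by $s_{-1}=1$, $s_0=a_0$, $s_k=a_ks_{k-1}+s_{k-2}$ and $t_{-1}=0$, $t_0=1$, $t_k=a_kt_{k-1}+t_{k-2}$ for $k\ge1$. For an odd natural number $n$ and an integer $m$ coprime to $n$, $\left(\frac{m}{n}\right)$ is the usual Jacobi symbol (equal to $1$ if $n=1$); if $n$ is even and $\gcd(m,n)=1$, one sets $\left(\frac{m}{n}\right)=*$, a fixed symbol different from $\pm1$. The Jacobi sequence of $x$ is $\left(\frac{s_k}{t_k}\right)$, $k\ge 0$. *)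

theory Defs
  imports Complex_Main "HOL-Number_Theory.Number_Theory"
begin

fun cf_rem :: "real \<Rightarrow> nat \<Rightarrow> real" where
  "cf_rem x 0 = x"
| "cf_rem x (Suc n) = 1 / frac (cf_rem x n)"

definition cf_a :: "real \<Rightarrow> nat \<Rightarrow> int" where
  "cf_a x n = \<lfloor>cf_rem x n\<rfloor>"

text \<open>Convergent numerators s_k and denominators t_k, with s_(-1) = 1, t_(-1) = 0.\<close>
fun cf_s :: "real \<Rightarrow> nat \<Rightarrow> int" where
  "cf_s x 0 = cf_a x 0"
| "cf_s x (Suc 0) = cf_a x 1 * cf_a x 0 + 1"
| "cf_s x (Suc (Suc n)) = cf_a x (n + 2) * cf_s x (Suc n) + cf_s x n"

fun cf_t :: "real \<Rightarrow> nat \<Rightarrow> int" where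
  "cf_t x 0 = 1"
| "cf_t x (Suc 0) = cf_a x 1"
| "cf_t x (Suc (Suc n)) = cf_a x (n + 2) * cf_t x (Suc n) + cf_t x n"

text \<open>Jacobi symbol (m/n) for odd positive n (equal to 1 for n = 1).\<close>
definition Jacobi :: "int \<Rightarrow> int \<Rightarrow> int" where
  "Jacobi m n = (\<Prod>p\<in>prime_factors n. Legendre m p ^ multiplicity p n)"

text \<open>Jacobi sequence: Some (s_k/t_k) if t_k is odd, None (the symbol *) if t_k is even.\<close>
definition jacobi_seq :: "real \<Rightarrow> nat \<Rightarrow> int option" where
  "jacobi_seq x k = (if odd (cf_t x k) then Some (Jacobi (cf_s x k) (cf_t x k)) else None)"

end

theory Submission
  imports Defs
begin

text \<open>
  Consecutive convergents satisfy s_(k+1) t_k - s_k t_(k+1) = (-1)^k. When t_k and t_(k+1)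
  are odd, reducing this identity modulo t_(k+1) and modulo t_k and combining the two
  resulting Jacobi symbols through Jacobi reciprocity shows that the product of two
  consecutive terms of the Jacobi sequence depends only on t_k, t_(k+1) mod 4 and on the
  parity of k. For the block -1, 1, 1, -1 the three products -1, 1, -1 impose incompatible
  conditions on t_k, ..., t_(k+3) mod 4; an eventually periodic sequence with block
  1, 1, -1 contains this block.
\<close>

subsection \<open>Characters modulo 4\<close>

definition chi4 :: "int \<Rightarrow> int" where
  "chi4 n = (if n mod 4 = 3 then -1 else 1)"

definition reciprocity_sign :: "int \<Rightarrow> int \<Rightarrow> int" where
  "reciprocity_sign m n = (if m mod 4 = 3 \<and> n mod 4 = 3 then -1 else 1)"

lemma chi4_mult: "odd a \<Longrightarrow> odd b \<Longrightarrow> chi4 (a * b) = chi4 a * chi4 b"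
proof -
  assume "odd a" "odd b"
  then have "a mod 4 = 1 \<or> a mod 4 = 3" "b mod 4 = 1 \<or> b mod 4 = 3"
    by presburger+
  moreover have "(a * b) mod 4 = (a mod 4) * (b mod 4) mod 4"
    by (simp add: mod_mult_eq)
  ultimately show ?thesis
    unfolding chi4_def by auto
qed

lemma reciprocity_sign_commute: "reciprocity_sign m n = reciprocity_sign n m"
  by (auto simp: reciprocity_sign_def)

lemma reciprocity_sign_eq_chi4: "reciprocity_sign m n = (if m mod 4 = 3 then chi4 n else 1)"
  by (simp add: reciprocity_sign_def chi4_def)

lemma reciprocity_sign_mult_left:
  "odd a \<Longrightarrow> odd b \<Longrightarrow> reciprocity_sign (a * b) n = reciprocity_sign a n * reciprocity_sign b n"
  using chi4_mult[of a b]
  by (simp add: reciprocity_sign_commute[of _ n] reciprocity_sign_eq_chi4[of n])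

lemma neg_one_power_half_eq_chi4:
  assumes "odd n" "n > 0"
  shows "(-1::int) ^ nat ((n - 1) div 2) = chi4 n"
proof -
  define q where "q = n div 4"
  have "q \<ge> 0"
    using assms(2) by (simp add: q_def)
  from assms(1) have "n = 4 * q + 1 \<or> n = 4 * q + 3"
    unfolding q_def by presburger
  then show ?thesis
  proof
    assume "n = 4 * q + 1"
    moreover from this have "nat ((n - 1) div 2) = 2 * nat q"
      using \<open>q \<ge> 0\<close> by simp
    ultimately show ?thesis by (simp add: chi4_def)
  next
    assume "n = 4 * q + 3"
    moreover from this have "nat ((n - 1) div 2) = Suc (2 * nat q)"
      using \<open>q \<ge> 0\<close> by simp
    ultimately show ?thesis by (simp add: chi4_def)
  qed
qed

subsection \<open>The Legendre symbol\<close>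

lemma Legendre_cong:
  assumes "[a = b] (mod p)"
  shows "Legendre a p = Legendre b p"
proof -
  have "[c = a] (mod p) \<longleftrightarrow> [c = b] (mod p)" for c
    using assms cong_sym cong_trans by blast
  then show ?thesis
    unfolding Legendre_def QuadRes_def by (simp add: cong_sym_eq[of _ 0])
qed

lemma Legendre_one: "prime p \<Longrightarrow> Legendre 1 p = 1"
proof -
  assume "prime p"
  then have "\<not> [1 = 0] (mod p)"
    using prime_gt_1_int by (auto simp: cong_def)
  moreover have "QuadRes p 1"
    unfolding QuadRes_def by (rule exI[of _ 1]) simp
  ultimately show ?thesis
    by (simp add: Legendre_def)
qed

lemma Legendre_cong_power_half:
  assumes "prime p" "p > 2"
  shows "[Legendre a p = a ^ nat ((p - 1) div 2)] (mod p)"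
proof -
  have "prime (nat p)" "2 < nat p"
    using assms by auto
  from euler_criterion[OF this, of a] show ?thesis
    using assms(2) by (simp add: nat_div_distrib nat_diff_distrib)
qed

text \<open>Values in \<open>{-1, 0, 1}\<close> are pairwise incongruent modulo \<open>p > 2\<close>, so Euler's
  criterion determines the Legendre symbol.\<close>

lemma Legendre_eqI_Euler:
  assumes "prime p" "p > 2" "v \<in> {-1, 0, 1}"
    and "[a ^ nat ((p - 1) div 2) = v] (mod p)"
  shows "Legendre a p = v"
proof -
  have "[Legendre a p + 1 = v + 1] (mod p)"
    using Legendre_cong_power_half[OF assms(1,2)] assms(4) by (metis cong_add_rcancel cong_trans)
  moreover have "Legendre a p \<in> {-1, 0, 1}"
    by (simp add: Legendre_def)
  ultimately show ?thesis
    using assms(2,3) cong_less_imp_eq_int[of "Legendre a p + 1" p "v + 1"] by auto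
qed

lemma Legendre_mult:
  assumes "prime p" "p > 2"
  shows "Legendre (a * b) p = Legendre a p * Legendre b p"
proof (rule Legendre_eqI_Euler[OF assms])
  show "Legendre a p * Legendre b p \<in> {-1, 0, 1}"
    by (simp add: Legendre_def)
  have "[Legendre a p * Legendre b p =
      a ^ nat ((p - 1) div 2) * b ^ nat ((p - 1) div 2)] (mod p)"
    using Legendre_cong_power_half[OF assms] by (intro cong_mult)
  then show "[(a * b) ^ nat ((p - 1) div 2) = Legendre a p * Legendre b p] (mod p)"
    by (simp add: power_mult_distrib cong_sym)
qed

lemma Legendre_neg_one:
  assumes "prime p" "p > 2"
  shows "Legendre (-1) p = chi4 p"
proof (rule Legendre_eqI_Euler[OF assms])
  show "chi4 p \<in> {-1, 0, 1}"
    by (simp add: chi4_def)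
  have "odd p"
    using assms prime_odd_int by blast
  then show "[(-1) ^ nat ((p - 1) div 2) = chi4 p] (mod p)"
    using neg_one_power_half_eq_chi4 assms by simp
qed

lemma Legendre_reciprocity:
  assumes p: "prime p" "p > 2" and q: "prime q" "q > 2" and "p \<noteq> q"
  shows "Legendre q p * Legendre p q = reciprocity_sign p q"
proof -
  have "Legendre p q * Legendre q p = (-1::int) ^ nat ((p - 1) div 2 * ((q - 1) div 2))"
    using Quadratic_Reciprocity_int assms by simp
  also have "\<dots> = ((-1) ^ nat ((p - 1) div 2)) ^ nat ((q - 1) div 2)"
    using assms by (simp add: nat_mult_distrib power_mult)
  also have "\<dots> = chi4 p ^ nat ((q - 1) div 2)"
    using neg_one_power_half_eq_chi4 p prime_odd_int by auto
  also have "\<dots> = reciprocity_sign p q"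
    using neg_one_power_half_eq_chi4[of q] q prime_odd_int
    by (auto simp: reciprocity_sign_eq_chi4 chi4_def)
  finally show ?thesis
    by (simp add: mult.commute)
qed

subsection \<open>The Jacobi symbol\<close>

lemma pos_int_prime_induct [consumes 1, case_names one prime_mult]:
  fixes n :: int
  assumes "n > 0"
    and "P 1"
    and "\<And>p m. prime p \<Longrightarrow> m > 0 \<Longrightarrow> P m \<Longrightarrow> P (p * m)"
  shows "P n"
proof -
  have "n > 0 \<longrightarrow> P n"
  proof (induction n rule: prime_divisors_induct)
    case (unit x)
    then show ?case using assms(2) by (auto simp: zdvd1_eq)
  next
    case (factor p x)
    then have "p > 0" by (simp add: prime_gt_0_int)
    then show ?case using factor assms(3) by (auto simp: zero_less_mult_iff)
  qed simp
  with assms(1) show ?thesis by blast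
qed

lemma Jacobi_eq_prod_mset:
  "Jacobi m n = prod_mset (image_mset (\<lambda>p. Legendre m p) (prime_factorization n))"
  unfolding Jacobi_def image_prod_mset_multiplicity
  by (intro prod.cong) (auto simp: count_prime_factorization in_prime_factors_iff)

lemma Jacobi_1_right [simp]: "Jacobi m 1 = 1"
  by (simp add: Jacobi_def)

lemma Jacobi_1_left [simp]: "Jacobi 1 n = 1"
  unfolding Jacobi_def
  by (intro prod.neutral) (auto simp: Legendre_one in_prime_factors_iff)

lemma Jacobi_prime: "prime p \<Longrightarrow> Jacobi m p = Legendre m p"
  by (simp add: Jacobi_eq_prod_mset prime_factorization_prime)

lemma Jacobi_mult_right:
  "a \<noteq> 0 \<Longrightarrow> b \<noteq> 0 \<Longrightarrow> Jacobi m (a * b) = Jacobi m a * Jacobi m b"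
  by (simp add: Jacobi_eq_prod_mset prime_factorization_mult)

lemma odd_prime_factor_gt_2: "odd n \<Longrightarrow> p \<in> prime_factors n \<Longrightarrow> p > (2::int)"
  using prime_ge_2_int[of p] by (auto simp: order_le_less)

lemma Jacobi_mult_left:
  assumes "odd n"
  shows "Jacobi (a * b) n = Jacobi a n * Jacobi b n"
proof -
  have "Jacobi (a * b) n = (\<Prod>p\<in>prime_factors n. (Legendre a p * Legendre b p) ^ multiplicity p n)"
    unfolding Jacobi_def
    using odd_prime_factor_gt_2[OF assms]
    by (intro prod.cong refl) (auto simp: Legendre_mult in_prime_factors_iff)
  also have "\<dots> = Jacobi a n * Jacobi b n"
    unfolding Jacobi_def power_mult_distrib prod.distrib ..
  finally show ?thesis .
qed

lemma Jacobi_cong: "[a = b] (mod n) \<Longrightarrow> Jacobi a n = Jacobi b n"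
  unfolding Jacobi_def
  by (intro prod.cong refl) (metis Legendre_cong cong_dvd_modulus in_prime_factors_imp_dvd)

lemma Jacobi_neg_one:
  assumes "n > 0" "odd n"
  shows "Jacobi (-1) n = chi4 n"
  using assms
proof (induction n rule: pos_int_prime_induct)
  case one
  then show ?case by (simp add: chi4_def)
next
  case (prime_mult p m)
  then have "odd p" "odd m" "p > 2"
    using prime_ge_2_int[of p] by (auto simp: order_le_less)
  then show ?case
    using prime_mult Legendre_neg_one
    by (simp add: Jacobi_mult_right Jacobi_prime chi4_mult)
qed

lemma Legendre_Jacobi_reciprocity:
  assumes p: "prime p" "p > 2" and "n > 0" "odd n" "\<not> p dvd n"
  shows "Legendre n p * Jacobi p n = reciprocity_sign p n"
  using assms(3-)
proof (induction n rule: pos_int_prime_induct)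
  case one
  then show ?case
    using Legendre_one p by (simp add: reciprocity_sign_def)
next
  case (prime_mult q m)
  then have "odd q" "odd m" "q > 2" "q \<noteq> p" "\<not> p dvd m"
    using prime_ge_2_int[of q] by (auto simp: order_le_less)
  have "Legendre (q * m) p * Jacobi p (q * m)
      = (Legendre q p * Legendre p q) * (Legendre m p * Jacobi p m)"
    using prime_mult Legendre_mult[OF p] by (simp add: Jacobi_mult_right Jacobi_prime)
  also have "\<dots> = reciprocity_sign p q * reciprocity_sign p m"
    using Legendre_reciprocity[OF p] prime_mult \<open>q > 2\<close> \<open>q \<noteq> p\<close> \<open>odd m\<close> \<open>\<not> p dvd m\<close>
    by simp
  also have "\<dots> = reciprocity_sign p (q * m)"
    using reciprocity_sign_mult_left[OF \<open>odd q\<close> \<open>odd m\<close>]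
    by (simp add: reciprocity_sign_commute[of p])
  finally show ?case .
qed

lemma Jacobi_reciprocity:
  assumes "m > 0" "odd m" and n: "n > 0" "odd n" and "coprime m n"
  shows "Jacobi m n * Jacobi n m = reciprocity_sign m n"
  using assms(1,2,5)
proof (induction m rule: pos_int_prime_induct)
  case one
  then show ?case by (simp add: reciprocity_sign_def)
next
  case (prime_mult p a)
  then have "odd p" "odd a" "p > 2" "coprime a n" "\<not> p dvd n"
    using prime_ge_2_int[of p]
    by (auto simp: order_le_less)
  have "Jacobi (p * a) n * Jacobi n (p * a) = (Jacobi p n * Legendre n p) * (Jacobi a n * Jacobi n a)"
    using prime_mult Jacobi_mult_left[OF n(2)] by (simp add: Jacobi_mult_right Jacobi_prime)
  also have "\<dots> = reciprocity_sign p n * reciprocity_sign a n"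
    using Legendre_Jacobi_reciprocity[OF \<open>prime p\<close> \<open>p > 2\<close> n \<open>\<not> p dvd n\<close>] prime_mult \<open>odd a\<close> \<open>coprime a n\<close>
    by (simp add: mult.commute)
  also have "\<dots> = reciprocity_sign (p * a) n"
    using reciprocity_sign_mult_left[OF \<open>odd p\<close> \<open>odd a\<close>] by simp
  finally show ?case .
qed

definition consecutive_sign :: "nat \<Rightarrow> int \<Rightarrow> int \<Rightarrow> int" where
  "consecutive_sign k m n = reciprocity_sign m n * (if even k then chi4 m else chi4 n)"

lemma Jacobi_mult_unimodular:
  assumes B: "B > 0" "odd B" and D: "D > 0" "odd D"
    and det: "C * B - A * D = (-1) ^ k"
  shows "Jacobi A B * Jacobi C D = consecutive_sign k B D"
proof -
  define e :: int where "e = (-1) ^ k"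
  have "coprime B D"
  proof -
    have "gcd B D dvd (-1) ^ k"
      using det by (metis dvd_diff dvd_mult gcd_dvd1 gcd_dvd2)
    moreover have "is_unit ((-1::int) ^ k)"
      by simp
    ultimately show ?thesis
      using dvd_unit_imp_unit is_unit_gcd by blast
  qed
  have "C * B - e = A * D"
    using det by (simp add: e_def)
  then have "[C * B = e] (mod D)"
    unfolding cong_iff_dvd_diff by simp
  then have right: "Jacobi C D * Jacobi B D = Jacobi e D"
    using Jacobi_mult_left[OF D(2)] Jacobi_cong by metis
  have "A * D - (-e) = C * B"
    using det by (simp add: e_def)
  then have "[A * D = -e] (mod B)"
    unfolding cong_iff_dvd_diff by simp
  then have left: "Jacobi A B * Jacobi D B = Jacobi (-e) B"
    using Jacobi_mult_left[OF B(2)] Jacobi_cong by metis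
  have signs: "Jacobi e D * Jacobi (-e) B = (if even k then chi4 B else chi4 D)"
    using Jacobi_neg_one[OF B] Jacobi_neg_one[OF D] by (simp add: e_def)
  have "Jacobi e D * Jacobi (-e) B = Jacobi A B * Jacobi C D * (Jacobi B D * Jacobi D B)"
    unfolding right [symmetric] left [symmetric] by (simp add: mult_ac)
  also have "\<dots> = Jacobi A B * Jacobi C D * reciprocity_sign B D"
    using Jacobi_reciprocity[OF B D \<open>coprime B D\<close>] by simp
  finally have "reciprocity_sign B D * (Jacobi e D * Jacobi (-e) B)
      = Jacobi A B * Jacobi C D * (reciprocity_sign B D * reciprocity_sign B D)"
    by (simp add: mult_ac)
  also have "reciprocity_sign B D * reciprocity_sign B D = 1"
    by (simp add: reciprocity_sign_def)
  finally show ?thesis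
    using signs by (simp add: consecutive_sign_def)
qed

subsection \<open>Convergents\<close>

lemma cf_rem_not_Rats: "x \<notin> \<rat> \<Longrightarrow> cf_rem x n \<notin> \<rat>"
proof (induction n)
  case (Suc n)
  show ?case
  proof
    assume "cf_rem x (Suc n) \<in> \<rat>"
    then have "frac (cf_rem x n) \<in> \<rat>"
      using Rats_inverse by (fastforce simp: inverse_eq_divide)
    then have "of_int \<lfloor>cf_rem x n\<rfloor> + frac (cf_rem x n) \<in> \<rat>"
      by (simp add: Rats_add)
    with Suc show False
      by (simp add: frac_def)
  qed
qed simp

lemma cf_a_ge_1:
  assumes "x \<notin> \<rat>" "n > 0"
  shows "cf_a x n \<ge> 1"
proof -
  obtain m where m: "n = Suc m"
    using assms(2) gr0_implies_Suc by blast
  have "cf_rem x m \<notin> \<int>"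
    using cf_rem_not_Rats[OF assms(1)] Ints_subset_Rats by blast
  then have "0 < frac (cf_rem x m)" "frac (cf_rem x m) < 1"
    using frac_ge_0 frac_lt_1 frac_eq_0_iff by (auto simp: order_le_less)
  then show ?thesis
    unfolding cf_a_def m by simp
qed

lemma cf_t_pos:
  assumes "x \<notin> \<rat>"
  shows "cf_t x n > 0"
proof -
  have "cf_t x n > 0 \<and> cf_t x (Suc n) > 0"
  proof (induction n)
    case 0
    then show ?case
      using cf_a_ge_1[OF assms, of 1] by simp
  next
    case (Suc n)
    then show ?case
      using cf_a_ge_1[OF assms, of "n + 2"] by (simp add: add_pos_pos)
  qed
  then show ?thesis ..
qed

lemma cf_s_cf_t_det: "cf_s x (Suc n) * cf_t x n - cf_s x n * cf_t x (Suc n) = (-1) ^ n"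
proof (induction n)
  case (Suc n)
  have "cf_s x (Suc (Suc n)) * cf_t x (Suc n) - cf_s x (Suc n) * cf_t x (Suc (Suc n))
      = -(cf_s x (Suc n) * cf_t x n - cf_s x n * cf_t x (Suc n))"
    by (simp add: algebra_simps)
  with Suc show ?case
    by simp
qed simp

lemma consecutive_sign_minus_plus_minus_impossible:
  assumes "consecutive_sign k t\<^sub>0 t\<^sub>1 = -1" "consecutive_sign (Suc k) t\<^sub>1 t\<^sub>2 = 1"
    and "consecutive_sign (Suc (Suc k)) t\<^sub>2 t\<^sub>3 = -1"
  shows False
  using assms
  by (cases "even k") (auto simp: consecutive_sign_def reciprocity_sign_def chi4_def split: if_splits)

lemma jacobi_seq_mult_Suc:
  assumes "x \<notin> \<rat>" "jacobi_seq x k = Some u" "jacobi_seq x (Suc k) = Some w"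
  shows "u * w = consecutive_sign k (cf_t x k) (cf_t x (Suc k))"
proof -
  have odd: "odd (cf_t x k)" "odd (cf_t x (Suc k))"
    and "u = Jacobi (cf_s x k) (cf_t x k)" "w = Jacobi (cf_s x (Suc k)) (cf_t x (Suc k))"
    using assms(2,3) unfolding jacobi_seq_def by (auto split: if_splits)
  with Jacobi_mult_unimodular[OF cf_t_pos[OF assms(1)] odd(1) cf_t_pos[OF assms(1)] odd(2)
      cf_s_cf_t_det]
  show ?thesis
    by simp
qed

lemma jacobi_seq_no_minus_plus_plus_minus:
  assumes "x \<notin> \<rat>"
  shows "\<not> (jacobi_seq x k = Some (-1) \<and> jacobi_seq x (k + 1) = Some 1
    \<and> jacobi_seq x (k + 2) = Some 1 \<and> jacobi_seq x (k + 3) = Some (-1))"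
proof
  assume "jacobi_seq x k = Some (-1) \<and> jacobi_seq x (k + 1) = Some 1
    \<and> jacobi_seq x (k + 2) = Some 1 \<and> jacobi_seq x (k + 3) = Some (-1)"
  then have "jacobi_seq x k = Some (-1)" "jacobi_seq x (Suc k) = Some 1"
    "jacobi_seq x (Suc (Suc k)) = Some 1" "jacobi_seq x (Suc (Suc (Suc k))) = Some (-1)"
    by (simp_all add: numeral_eq_Suc)
  then have "consecutive_sign k (cf_t x k) (cf_t x (Suc k)) = -1"
    "consecutive_sign (Suc k) (cf_t x (Suc k)) (cf_t x (Suc (Suc k))) = 1"
    "consecutive_sign (Suc (Suc k)) (cf_t x (Suc (Suc k))) (cf_t x (Suc (Suc (Suc k)))) = -1"
    using jacobi_seq_mult_Suc[OF assms] by (metis mult_minus1 mult_1)+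
  then show False
    by (rule consecutive_sign_minus_plus_minus_impossible)
qed

theorem theorem9:
  fixes x :: real
  assumes "x \<notin> \<rat>"
  shows "\<not> (\<exists>k. jacobi_seq x k = Some (-1) \<and> jacobi_seq x (k + 1) = Some 1
              \<and> jacobi_seq x (k + 2) = Some 1 \<and> jacobi_seq x (k + 3) = Some (-1))
         \<and> \<not> (\<exists>N. \<forall>k\<ge>N. jacobi_seq x k = Some ([1, 1, -1] ! ((k - N) mod 3)))"
proof
  show "\<not> (\<exists>k. jacobi_seq x k = Some (-1) \<and> jacobi_seq x (k + 1) = Some 1
              \<and> jacobi_seq x (k + 2) = Some 1 \<and> jacobi_seq x (k + 3) = Some (-1))"
    using jacobi_seq_no_minus_plus_plus_minus[OF assms] by blast
  show "\<not> (\<exists>N. \<forall>k\<ge>N. jacobi_seq x k = Some ([1, 1, -1] ! ((k - N) mod 3)))"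
  proof
    assume "\<exists>N. \<forall>k\<ge>N. jacobi_seq x k = Some ([1, 1, -1] ! ((k - N) mod 3))"
    then obtain N where periodic: "\<And>k. k \<ge> N \<Longrightarrow> jacobi_seq x k = Some ([1, 1, -1] ! ((k - N) mod 3))"
      by blast
    have "jacobi_seq x (N + 2) = Some (-1)" "jacobi_seq x (N + 3) = Some 1"
      "jacobi_seq x (N + 4) = Some 1" "jacobi_seq x (N + 5) = Some (-1)"
      using periodic[of "N + 2"] periodic[of "N + 3"] periodic[of "N + 4"] periodic[of "N + 5"]
      by simp_all
    moreover have "N + 2 + 1 = N + 3" "N + 2 + 2 = N + 4" "N + 2 + 3 = N + 5"
      by simp_all
    ultimately show False
      using jacobi_seq_no_minus_plus_plus_minus[OF assms, of "N + 2"] by metis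
  qed
qed

end
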